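(* Let $G=(G_t)_{t\geq 0}$, $G_t=(V_t,E_t)$, be a dynamic graph generated by D3G3 (with arbitrary parameters $d$, $S_S$, $S_C$ and arbitrary non-null seed graph $G_0$). Write $n_t=|V_t|$ and let $\mathcal{N}^V_t$ denote the vertices nervousness at time $t$. If for all $t>0$ we have $n_t>0$ and $\mathcal{N}^V_t>0$, then $G$ is sustainable.
   Context: Let $\mathbb{T}=[0,1)^2$ be the unit torus (opposite sides identified) with its toroidal Euclidean distance $\mathrm{dist}$. A geometric graph with threshold $d$ on a finite set $V$ of points of $\mathbb{T}$ has edge set $E=\{\{u,v\}: u\neq v\in V,\ \mathrm{dist}(u,v)\leq d\}$. D3G3 (Degree-Driven Dynamic Geometric Graph Generator) takes parameters $d\in(0,\sqrt2/2)$, two sets $S_S,S_C$ of non-negative integers, and a non-null seed geometric graph $G_0$. Given $G_t=(V_t,E_t)$, the graph $G_{t+1}$ is obtained by applying simultaneously to every $v\in V_t$ (with $\deg(v)$ its degree in $G_t$): (conservation rule) $v\in V_{t+1}$, at the same position, iff $\deg(v)\in S_S$; (creation rule) if $\deg(v)\in S_C$, a brand new vertex (distinct from all vertices ever present) is added to $V_{t+1}$ at a position chosen uniformly at random in $\mathbb{T}$, independently of everything else. $V_{t+1}$ contains no other vertices, and $E_{t+1}$ is given by the geometric rule with threshold $d$. The vertices nervousness is $\mathcal{N}^V_t=\frac{|V_{t+1}\triangle V_t|}{|V_{t+1}\cup V_t|}$, where $A\triangle B=(A\cup B)\setminus(A\cap B)$. A dynamic graph $G$ is sustainable if neither of the following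 holds: (1) there is $T\in\mathbb{N}$ with $G_t=(\emptyset,\emptyset)$ for all $t\geq T$; (2) there are $T\in\mathbb{N}$ and $k\geq1$ with $G_t=G_{t+k}$ for all $t\geq T$. *)

theory Defs
  imports Complex_Main
begin

text \<open>Points of the unit torus are represented by their coordinates in [0,1)^2.\<close>
definition in_torus :: "real \<times> real \<Rightarrow> bool" where
  "in_torus p \<longleftrightarrow> 0 \<le> fst p \<and> fst p < 1 \<and> 0 \<le> snd p \<and> snd p < 1"

text \<open>Toroidal Euclidean distance on [0,1)^2 with opposite sides identified.\<close>
definition tdist :: "real \<times> real \<Rightarrow> real \<times> real \<Rightarrow> real" where
  "tdist p q = sqrt ((min \<bar>fst p - fst q\<bar> (1 - \<bar>fst p - fst q\<bar>))\<^sup>2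
                   + (min \<bar>snd p - snd q\<bar> (1 - \<bar>snd p - snd q\<bar>))\<^sup>2)"

definition gedges :: "real \<Rightarrow> ('v \<Rightarrow> real \<times> real) \<Rightarrow> 'v set \<Rightarrow> 'v set set" where
  "gedges d pos A = {{u, v} | u v. u \<in> A \<and> v \<in> A \<and> u \<noteq> v \<and> tdist (pos u) (pos v) \<le> d}"

definition gdeg :: "real \<Rightarrow> ('v \<Rightarrow> real \<times> real) \<Rightarrow> 'v set \<Rightarrow> 'v \<Rightarrow> nat" where
  "gdeg d pos A v = card {u \<in> A. {v, u} \<in> gedges d pos A}"

text \<open>A (sample path of a) D3G3 run: V t is the vertex set at time t, pos the
  (time-independent) position of each vertex, child t v the brand new vertex created
  by v at step t (when deg v is in SC).\<close>
definition d3g3_run ::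
  "real \<Rightarrow> nat set \<Rightarrow> nat set \<Rightarrow> ('v \<Rightarrow> real \<times> real) \<Rightarrow> (nat \<Rightarrow> 'v set)
     \<Rightarrow> (nat \<Rightarrow> 'v \<Rightarrow> 'v) \<Rightarrow> bool" where
  "d3g3_run d SS SC pos V child \<longleftrightarrow>
     0 < d \<and> d < sqrt 2 / 2 \<and>
     finite (V 0) \<and> V 0 \<noteq> {} \<and>
     (\<forall>v. in_torus (pos v)) \<and>
     (\<forall>t. V (Suc t) = {v \<in> V t. gdeg d pos (V t) v \<in> SS}
                     \<union> child t ` {v \<in> V t. gdeg d pos (V t) v \<in> SC}) \<and>
     (\<forall>t. inj_on (child t) {v \<in> V t. gdeg d pos (V t) v \<in> SC}) \<and>
     (\<forall>t v s. v \<in> V t \<and> gdeg d pos (V t) v \<in> SC \<and> s \<le> t \<longrightarrow> child t v \<notin> V s)"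

definition graph_at :: "real \<Rightarrow> ('v \<Rightarrow> real \<times> real) \<Rightarrow> (nat \<Rightarrow> 'v set) \<Rightarrow> nat
     \<Rightarrow> 'v set \<times> 'v set set" where
  "graph_at d pos V t = (V t, gedges d pos (V t))"

definition vertex_nervousness :: "(nat \<Rightarrow> 'v set) \<Rightarrow> nat \<Rightarrow> real" where
  "vertex_nervousness V t =
     real (card ((V (Suc t) \<union> V t) - (V (Suc t) \<inter> V t))) / real (card (V (Suc t) \<union> V t))"

definition sustainable :: "(nat \<Rightarrow> 'a set \<times> 'b set) \<Rightarrow> bool" where
  "sustainable G \<longleftrightarrow>
     \<not> (\<exists>T. \<forall>t\<ge>T. G t = ({}, {})) \<and>
     \<not> (\<exists>T k. k \<ge> 1 \<and> (\<forall>t\<ge>T. G t = G (t + k)))"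

end

theory Submission
  imports Defs
begin

text \<open>A vertex created at step t is brand new, so it cannot be one that was already present
  earlier. Hence, if the vertex sets are eventually periodic, every vertex alive after a
  step was alive one period before, hence before the step: from then on the vertex sets
  can only shrink, and a shrinking periodic sequence is constant. A constant step has
  nervousness 0, which is excluded; and the empty graph is excluded by n_t > 0.\<close>

lemma d3g3_run_vertex_persists:
  assumes run: "d3g3_run d SS SC pos V child"
    and "x \<in> V s" "s \<le> t" "x \<in> V (Suc t)"
  shows "x \<in> V t"
proof (rule ccontr)
  assume "x \<notin> V t"
  moreover have "V (Suc t) = {v \<in> V t. gdeg d pos (V t) v \<in> SS}
                     \<union> child t ` {v \<in> V t. gdeg d pos (V t) v \<in> SC}"
    using run unfolding d3g3_run_def by blast
  ultimately obtain v where "v \<in> V t" "gdeg d pos (V t) v \<in> SC" "x = child t v"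
    using \<open>x \<in> V (Suc t)\<close> by auto
  moreover have "\<forall>t v s. v \<in> V t \<and> gdeg d pos (V t) v \<in> SC \<and> s \<le> t \<longrightarrow> child t v \<notin> V s"
    using run unfolding d3g3_run_def by blast
  ultimately show False
    using assms(2,3) by blast
qed

lemma d3g3_run_periodic_shrinks:
  assumes run: "d3g3_run d SS SC pos V child"
    and "k \<ge> 1" and period: "\<And>t. t \<ge> T \<Longrightarrow> V (t + k) = V t"
    and "T + k \<le> Suc t"
  shows "V (Suc t) \<subseteq> V t"
proof
  fix x assume x: "x \<in> V (Suc t)"
  have "V (Suc t) = V (Suc t - k)"
    using period[of "Suc t - k"] \<open>T + k \<le> Suc t\<close> by simp
  with x have "x \<in> V (Suc t - k)" by simp
  moreover have "Suc t - k \<le> t"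
    using \<open>k \<ge> 1\<close> by simp
  ultimately show "x \<in> V t"
    using d3g3_run_vertex_persists[OF run _ _ x] by blast
qed

lemma antitone_from_periodic_stationary:
  fixes f :: "nat \<Rightarrow> 'a::order"
  assumes antitone: "\<And>t. t \<ge> T \<Longrightarrow> f (Suc t) \<le> f t"
    and "k \<ge> 1" and "f (T + k) = f T"
  shows "f (Suc T) = f T"
proof -
  have "f (Suc T + j) \<le> f (Suc T)" for j
  proof (induction j)
    case (Suc j)
    then show ?case
      using antitone[of "Suc T + j"] by (simp add: order_trans)
  qed simp
  from this[of "k - 1"] have "f T \<le> f (Suc T)"
    using \<open>k \<ge> 1\<close> \<open>f (T + k) = f T\<close> by simp
  with antitone[of T] show ?thesis by simp
qed

lemma d3g3_run_periodic_stationary: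
  assumes run: "d3g3_run d SS SC pos V child"
    and "k \<ge> 1" and period: "\<And>t. t \<ge> T \<Longrightarrow> V (t + k) = V t"
  shows "V (Suc (T + k)) = V (T + k)"
proof (rule antitone_from_periodic_stationary[where f = V])
  fix t assume "t \<ge> T + k"
  then have "T + k \<le> Suc t" by simp
  with run \<open>k \<ge> 1\<close> period show "V (Suc t) \<subseteq> V t"
    by (rule d3g3_run_periodic_shrinks)
next
  show "V (T + k + k) = V (T + k)"
    using period[of "T + k"] by simp
qed fact

lemma vertex_nervousness_stationary:
  assumes "V (Suc t) = V t"
  shows "vertex_nervousness V t = 0"
  unfolding vertex_nervousness_def assms by simp

theorem theorem1:
  fixes d :: real and SS SC :: "nat set" and pos :: "'v \<Rightarrow> real \<times> real"
    and V :: "nat \<Rightarrow> 'v set" and child :: "nat \<Rightarrow> 'v \<Rightarrow> 'v"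
  assumes run: "d3g3_run d SS SC pos V child"
    and pos_n: "\<forall>t>0. card (V t) > 0"
    and pos_nerv: "\<forall>t>0. vertex_nervousness V t > 0"
  shows "sustainable (graph_at d pos V)"
  unfolding sustainable_def
proof (intro conjI notI; elim exE conjE)
  fix T assume "\<forall>t\<ge>T. graph_at d pos V t = ({}, {})"
  then have "V (Suc T) = {}" by (simp add: graph_at_def)
  moreover have "card (V (Suc T)) > 0"
    using pos_n by simp
  ultimately show False by simp
next
  fix T k :: nat
  assume "k \<ge> 1" and periodic: "\<forall>t\<ge>T. graph_at d pos V t = graph_at d pos V (t + k)"
  have "V (t + k) = V t" if "t \<ge> T" for t
    using periodic[rule_format, OF that] by (simp add: graph_at_def)
  with run \<open>k \<ge> 1\<close> have "V (Suc (T + k)) = V (T + k)"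
    by (rule d3g3_run_periodic_stationary)
  then have "vertex_nervousness V (T + k) = 0"
    by (rule vertex_nervousness_stationary)
  moreover have "vertex_nervousness V (T + k) > 0"
    using pos_nerv \<open>k \<ge> 1\<close> by simp
  ultimately show False by simp
qed

end
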